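(* For $j,k\in\mathbb{N}$ let $$R_{jk}=2^{3/2}\int_0^1\sin\Big(\frac{\pi x}{2}\Big)^{1/2}\sin(j\pi x)\sin(k\pi x)\,\mathrm{d}x,\qquad S_{jk}=\int_0^1\sin\Big(\frac{\pi x}{2}\Big)^{-1}\sin(j\pi x)\sin(k\pi x)\,\mathrm{d}x.$$ Let $n\in\mathbb{N}\setminus\{1\}$ and $j,k\in\{1,\dots,n\}$. Then: (i) $R_{jj}>0$, $R_{jk}<0$ if $j\ne k$, and $|R_{jk}|\le2\sqrt2$; (ii) $R_{n,n-1}$ is a decreasing function of $n\in\mathbb{N}\setminus\{1\}$; (iii) $2\sum_{k=1}^{n-1}R_{kn}\ge-R_{nn}$; (iv) $S_{jk}>\frac1\pi\log\Big(\frac{j+k+\frac12}{|j-k|+\frac12}\Big)>0$; (v) $S_{jk}<\frac1\pi\log\Big(\frac{j+k-\frac12}{|j-k|-\frac12}\Big)$ for $j\ne k$, and $S_{jj}<\frac2\pi+\frac1\pi\log(4j-1)$; (vi) $S_{jn}$ is an increasing function of $j$ for $1\le j\le n$. *)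

theory Defs
  imports "HOL-Analysis.Analysis"
begin

definition R :: "nat \<Rightarrow> nat \<Rightarrow> real" where
  "R j k = 2 powr (3/2) *
     integral {0..1} (\<lambda>x. sin (pi * x / 2) powr (1/2) * sin (real j * pi * x) * sin (real k * pi * x))"

text \<open>S_{jk} = int_0^1 sin(pi x/2)^(-1) sin(j pi x) sin(k pi x) dx
  (the integrand extends continuously to x = 0; in HOL, inverse 0 = 0 there)\<close>
definition S :: "nat \<Rightarrow> nat \<Rightarrow> real" where
  "S j k = integral {0..1} (\<lambda>x. inverse (sin (pi * x / 2)) * sin (real j * pi * x) * sin (real k * pi * x))"

end

theory Submission
  imports Defs
begin

text \<open>
  Everything rests on the product formula
  \<open>sin (j t) sin (k t) = (cos (|j - k| t) - cos ((j + k) t)) / 2\<close>.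

  For \<open>S\<close>, the telescoping identity
  \<open>sin (t/2) (\<Sum>i=a..<b. sin ((i + 1/2) t)) = (cos (a t) - cos (b t)) / 2\<close> cancels the
  singular factor, so \<open>\<pi> S j k\<close> is exactly the sum of \<open>1/(i + 1/2)\<close> over
  \<open>|j - k| \<le> i < j + k\<close>; all claims on \<open>S\<close> compare this sum with logarithms.

  For \<open>R\<close>, the formula gives \<open>R j k = sqrt 2 (J |j - k| - J (j + k))\<close>, where \<open>J m\<close> is the
  \<open>m\<close>-th cosine moment of \<open>sqrt (sin (\<pi> x/2))\<close> on \<open>[0,1]\<close>. Integrating the derivative of
  \<open>sin (\<pi> x/2) sqrt (sin (\<pi> x/2)) cos ((m + 1/2) \<pi> x)\<close>, which vanishes at both ends, yields
  the recurrence \<open>(m + 5/4) J (m+1) = (m - 1/4) J m\<close>. Hence \<open>J 0 > 0\<close>, while \<open>J m < 0\<close> and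
  \<open>J\<close> is strictly increasing for \<open>m \<ge> 1\<close>, and \<open>J 0 + 2 (J 1 + \<dots> + J p) = -(4p + 5) J (p+1) > 0\<close>.
\<close>

definition nat_absdiff :: "nat \<Rightarrow> nat \<Rightarrow> nat" where
  "nat_absdiff j k = (if k \<le> j then j - k else k - j)"

lemma of_nat_absdiff: "real (nat_absdiff j k) = \<bar>real j - real k\<bar>"
  by (simp add: nat_absdiff_def)

lemma nat_absdiff_self [simp]: "nat_absdiff j j = 0"
  by (simp add: nat_absdiff_def)

lemma nat_absdiff_pos: "j \<noteq> k \<Longrightarrow> 0 < nat_absdiff j k"
  by (simp add: nat_absdiff_def)

lemma nat_absdiff_less_add: "0 < j \<Longrightarrow> 0 < k \<Longrightarrow> nat_absdiff j k < j + k"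
  by (auto simp: nat_absdiff_def)

lemma sin_times_sin_nat:
  "sin (real j * t) * sin (real k * t) = (cos (real (nat_absdiff j k) * t) - cos (real (j + k) * t)) / 2"
proof -
  have "cos (real j * t - real k * t) = cos (\<bar>real j - real k\<bar> * t)"
    using cos_minus[of "real j * t - real k * t"] by (simp add: left_diff_distrib abs_if)
  then show ?thesis
    by (simp add: sin_times_sin of_nat_absdiff distrib_right)
qed

lemma sin_half_times_sum_sin:
  assumes "a \<le> b"
  shows "sin (t / 2) * (\<Sum>i = a..<b. sin ((real i + 1/2) * t)) = (cos (real a * t) - cos (real b * t)) / 2"
proof -
  have step: "sin (t / 2) * sin ((real i + 1/2) * t) = (cos (real i * t) - cos (real (Suc i) * t)) / 2" for i
    by (simp add: sin_times_sin algebra_simps)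
  have "(\<Sum>i = a..<b. cos (real i * t) - cos (real (Suc i) * t)) = cos (real a * t) - cos (real b * t)"
    using sum_Suc_diff'[OF assms, of "\<lambda>i. - cos (real i * t)"] by simp
  then show ?thesis
    by (simp add: sum_distrib_left step flip: sum_divide_distrib)
qed

lemma cos_half_odd_pi: "cos ((real m + 1/2) * pi) = 0"
proof -
  have "(real m + 1/2) * pi = real m * pi + pi / 2"
    by (simp add: algebra_simps)
  then show ?thesis
    by (simp add: cos_add)
qed

lemma has_integral_sin_half_odd:
  "((\<lambda>x. sin ((real i + 1/2) * pi * x)) has_integral 1 / ((real i + 1/2) * pi)) {0..1}"
proof -
  define c where "c = (real i + 1/2) * pi"
  have "c > 0"
    by (simp add: c_def)
  have "((\<lambda>x. - cos (c * x) / c) has_real_derivative sin (c * x)) (at x)" for x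
    using \<open>c > 0\<close> by (auto intro!: derivative_eq_intros)
  then have "((\<lambda>x. sin (c * x)) has_integral (- cos (c * 1) / c) - (- cos (c * 0) / c)) {0..1}"
    using \<open>c > 0\<close>
    by (intro fundamental_theorem_of_calculus_interior continuous_intros)
       (auto simp: has_real_derivative_iff_has_vector_derivative)
  then show ?thesis
    by (simp add: c_def cos_half_odd_pi)
qed

lemma S_eq_sum: "S j k = (\<Sum>i = nat_absdiff j k..<j + k. 1 / (real i + 1/2)) / pi"
proof -
  have le: "nat_absdiff j k \<le> j + k"
    by (auto simp: nat_absdiff_def)
  have integrand: "inverse (sin (pi * x / 2)) * sin (real j * pi * x) * sin (real k * pi * x)
      = (\<Sum>i = nat_absdiff j k..<j + k. sin ((real i + 1/2) * pi * x))" if "x \<in> {0..1}" for x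
  proof (cases "x = 0")
    case False
    with that have "sin (pi * x / 2) > 0"
      by (intro sin_gt_zero) auto
    moreover have "sin (real j * pi * x) * sin (real k * pi * x)
        = sin (pi * x / 2) * (\<Sum>i = nat_absdiff j k..<j + k. sin ((real i + 1/2) * pi * x))"
      using sin_times_sin_nat[of j "pi * x" k] sin_half_times_sum_sin[OF le, of "pi * x"]
      by (simp add: mult.assoc)
    ultimately show ?thesis
      by (simp add: mult.assoc)
  qed simp
  have sum_integral: "((\<lambda>x. \<Sum>i = nat_absdiff j k..<j + k. sin ((real i + 1/2) * pi * x)) has_integral
      (\<Sum>i = nat_absdiff j k..<j + k. 1 / ((real i + 1/2) * pi))) {0..1}"
    by (intro has_integral_sum has_integral_sin_half_odd) simp
  have "S j k = integral {0..1} (\<lambda>x. \<Sum>i = nat_absdiff j k..<j + k. sin ((real i + 1/2) * pi * x))"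
    unfolding S_def by (rule integral_cong) (rule integrand)
  also have "\<dots> = (\<Sum>i = nat_absdiff j k..<j + k. 1 / (real i + 1/2)) / pi"
    using integral_unique[OF sum_integral] by (simp add: sum_divide_distrib)
  finally show ?thesis .
qed

lemma ln_less_sum_inverse:
  fixes c :: real
  assumes "0 < c" and "a < b"
  shows "ln ((real b + c) / (real a + c)) < (\<Sum>i = a..<b. 1 / (real i + c))"
proof -
  have "ln (real (Suc i) + c) - ln (real i + c) < 1 / (real i + c)" for i
    using ln_diff_less[of "real (Suc i) + c" "real i + c"] \<open>0 < c\<close> by simp
  then have "(\<Sum>i = a..<b. ln (real (Suc i) + c) - ln (real i + c)) < (\<Sum>i = a..<b. 1 / (real i + c))"
    using \<open>a < b\<close> by (intro sum_strict_mono) auto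
  then show ?thesis
    using sum_Suc_diff'[of a b "\<lambda>i. ln (real i + c)"] \<open>0 < c\<close> \<open>a < b\<close> by (simp add: ln_div)
qed

lemma sum_inverse_less_ln:
  fixes c :: real
  assumes "1 < real a + c" and "a < b"
  shows "(\<Sum>i = a..<b. 1 / (real i + c)) < ln ((real b - 1 + c) / (real a - 1 + c))"
proof -
  have "1 / (real i + c) < ln (real (Suc i) - 1 + c) - ln (real i - 1 + c)" if "a \<le> i" for i
  proof -
    have "1 < real i + c"
      using that assms(1) by linarith
    then show ?thesis
      using ln_diff_less[of "real i - 1 + c" "real i + c"] by (simp add: diff_divide_distrib)
  qed
  then have "(\<Sum>i = a..<b. 1 / (real i + c)) < (\<Sum>i = a..<b. ln (real (Suc i) - 1 + c) - ln (real i - 1 + c))"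
    using \<open>a < b\<close> by (intro sum_strict_mono) auto
  then show ?thesis
    using sum_Suc_diff'[of a b "\<lambda>i. ln (real i - 1 + c)"] assms by (simp add: ln_div)
qed

lemma S_gt_ln:
  assumes "0 < j" and "0 < k"
  shows "(1 / pi) * ln ((real j + real k + 1/2) / (\<bar>real j - real k\<bar> + 1/2)) < S j k"
  using ln_less_sum_inverse[of "1/2", OF _ nat_absdiff_less_add[OF assms]]
  by (simp add: S_eq_sum of_nat_absdiff divide_strict_right_mono)

lemma ln_add_over_absdiff_pos:
  assumes "0 < j" and "0 < k"
  shows "0 < (1 / pi) * ln ((real j + real k + 1/2) / (\<bar>real j - real k\<bar> + 1/2))"
proof -
  have "\<bar>real j - real k\<bar> < real j + real k"
    using assms by linarith
  then show ?thesis
    by simp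
qed

lemma S_lt_ln:
  assumes "0 < j" and "0 < k" and "j \<noteq> k"
  shows "S j k < (1 / pi) * ln ((real j + real k - 1/2) / (\<bar>real j - real k\<bar> - 1/2))"
proof -
  have "1 < real (nat_absdiff j k) + 1/2"
    using nat_absdiff_pos[OF \<open>j \<noteq> k\<close>] by simp
  from sum_inverse_less_ln[OF this nat_absdiff_less_add[OF assms(1,2)]] show ?thesis
    by (simp add: S_eq_sum of_nat_absdiff divide_strict_right_mono)
qed

lemma S_diag_lt:
  assumes "0 < j"
  shows "S j j < 2 / pi + (1 / pi) * ln (4 * real j - 1)"
proof -
  have "(\<Sum>i = 0..<j + j. 1 / (real i + 1/2)) = 2 + (\<Sum>i = 1..<j + j. 1 / (real i + 1/2))"
    using assms by (simp add: sum.atLeast_Suc_lessThan)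
  also have "(\<Sum>i = 1..<j + j. 1 / (real i + 1/2)) < ln (4 * real j - 1)"
    using sum_inverse_less_ln[of 1 "1/2" "j + j"] assms by simp
  finally have "S j j < (2 + ln (4 * real j - 1)) / pi"
    by (simp add: S_eq_sum divide_strict_right_mono)
  then show ?thesis
    by (simp add: add_divide_distrib)
qed

lemma S_mono_left:
  assumes "a \<le> b" and "b \<le> n"
  shows "S a n \<le> S b n"
proof -
  have "{nat_absdiff a n..<a + n} \<subseteq> {nat_absdiff b n..<b + n}"
    using assms by (auto simp: nat_absdiff_def)
  then show ?thesis
    unfolding S_eq_sum by (intro divide_right_mono sum_mono2) auto
qed

definition J :: "nat \<Rightarrow> real" where
  "J m = integral {0..1} (\<lambda>x. sqrt (sin (pi * x / 2)) * cos (real m * pi * x))"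

lemma has_integral_J: "((\<lambda>x. sqrt (sin (pi * x / 2)) * cos (real m * pi * x)) has_integral J m) {0..1}"
  unfolding J_def by (intro integrable_integral integrable_continuous_interval continuous_intros) auto

lemma two_powr_three_halves: "2 powr (3/2) = 2 * sqrt (2::real)"
  using powr_add[of "2::real" 1 "1/2"] by (simp add: powr_half_sqrt)

lemma R_eq_J: "R j k = sqrt 2 * (J (nat_absdiff j k) - J (j + k))"
proof -
  have integrand: "sin (pi * x / 2) powr (1/2) * sin (real j * pi * x) * sin (real k * pi * x)
      = (sqrt (sin (pi * x / 2)) * cos (real (nat_absdiff j k) * pi * x)
         - sqrt (sin (pi * x / 2)) * cos (real (j + k) * pi * x)) / 2" if "x \<in> {0..1}" for x
  proof -
    from that have "0 \<le> sin (pi * x / 2)"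
      by (intro sin_ge_zero) auto
    then show ?thesis
      using sin_times_sin_nat[of j "pi * x" k]
      by (simp add: powr_half_sqrt mult.assoc right_diff_distrib)
  qed
  have "integral {0..1} (\<lambda>x. sin (pi * x / 2) powr (1/2) * sin (real j * pi * x) * sin (real k * pi * x))
      = integral {0..1} (\<lambda>x. (sqrt (sin (pi * x / 2)) * cos (real (nat_absdiff j k) * pi * x)
         - sqrt (sin (pi * x / 2)) * cos (real (j + k) * pi * x)) / 2)"
    by (rule integral_cong) (rule integrand)
  also have "\<dots> = (J (nat_absdiff j k) - J (j + k)) / 2"
    by (intro integral_unique has_integral_divide has_integral_diff has_integral_J)
  finally show ?thesis
    unfolding R_def by (simp add: two_powr_three_halves)
qed

lemma J_primitive_has_derivative:
  assumes pos: "sin (pi * x / 2) > 0"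
  shows "((\<lambda>x. sin (pi * x / 2) * sqrt (sin (pi * x / 2)) * cos ((real m + 1/2) * pi * x)) has_real_derivative
     pi / 2 * ((real m + 5/4) * (sqrt (sin (pi * x / 2)) * cos (real (Suc m) * pi * x))
       - (real m - 1/4) * (sqrt (sin (pi * x / 2)) * cos (real m * pi * x)))) (at x)"
proof -
  define u where "u = pi * x / 2"
  define w where "w = (real m + 1/2) * pi * x"
  define q where "q = sqrt (sin u)"
  have "q > 0" and sin_u: "sin u = q\<^sup>2"
    using pos by (simp_all add: q_def u_def)
  have angles: "real (Suc m) * pi * x = w + u" "real m * pi * x = w - u"
    by (simp_all add: u_def w_def algebra_simps)
  have "((\<lambda>x. sin (pi * x / 2) * sqrt (sin (pi * x / 2)) * cos ((real m + 1/2) * pi * x)) has_real_derivative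
     cos u * (pi / 2) * q * cos w + sin u * (cos u * (pi / 2) / (2 * q)) * cos w
       - sin u * q * (sin w * ((real m + 1/2) * pi))) (at x)"
    using pos unfolding u_def w_def q_def by (auto intro!: derivative_eq_intros simp: field_simps)
  also have "cos u * (pi / 2) * q * cos w + sin u * (cos u * (pi / 2) / (2 * q)) * cos w
       - sin u * q * (sin w * ((real m + 1/2) * pi))
     = pi / 2 * ((real m + 5/4) * (q * cos (w + u)) - (real m - 1/4) * (q * cos (w - u)))"
    using \<open>q > 0\<close> by (simp add: sin_u cos_add cos_diff field_simps power2_eq_square)
  finally show ?thesis
    unfolding angles q_def u_def w_def .
qed

lemma J_recurrence: "(real m + 5/4) * J (Suc m) = (real m - 1/4) * J m"
proof -
  define G where "G x = sin (pi * x / 2) * sqrt (sin (pi * x / 2)) * cos ((real m + 1/2) * pi * x)" for x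
  define g where "g x = pi / 2 * ((real m + 5/4) * (sqrt (sin (pi * x / 2)) * cos (real (Suc m) * pi * x))
    - (real m - 1/4) * (sqrt (sin (pi * x / 2)) * cos (real m * pi * x)))" for x
  have "G 1 = 0" "G 0 = 0"
    by (simp_all add: G_def cos_half_odd_pi)
  have cont: "continuous_on {0..1} G"
    unfolding G_def by (intro continuous_intros) auto
  have deriv: "(G has_vector_derivative g x) (at x)" if "x \<in> {0<..<1}" for x
  proof -
    from that have "sin (pi * x / 2) > 0"
      by (intro sin_gt_zero) auto
    then show ?thesis
      unfolding G_def g_def has_real_derivative_iff_has_vector_derivative[symmetric]
      by (rule J_primitive_has_derivative)
  qed
  have "(g has_integral G 1 - G 0) {0..1}"
    by (rule fundamental_theorem_of_calculus_interior[OF zero_le_one cont deriv])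
  moreover have "(g has_integral pi / 2 * ((real m + 5/4) * J (Suc m) - (real m - 1/4) * J m)) {0..1}"
    unfolding g_def by (intro has_integral_mult_right has_integral_diff has_integral_J)
  ultimately have "G 1 - G 0 = pi / 2 * ((real m + 5/4) * J (Suc m) - (real m - 1/4) * J m)"
    by (rule has_integral_unique)
  then show ?thesis
    using \<open>G 1 = 0\<close> \<open>G 0 = 0\<close> by simp
qed

lemma J_0_ge: "2 / pi \<le> J 0"
proof (rule has_integral_le[OF _ has_integral_J])
  show "((\<lambda>x. sin (pi * x / 2)) has_integral 2 / pi) {0..1}"
    using has_integral_sin_half_odd[of 0] by (simp add: mult.commute)
  fix x :: real
  assume "x \<in> {0..1}"
  then have "0 \<le> sin (pi * x / 2)"
    by (intro sin_ge_zero) auto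
  then have "(sin (pi * x / 2))\<^sup>2 \<le> sin (pi * x / 2)"
    by (simp add: power2_eq_square mult_left_le_one_le)
  then show "sin (pi * x / 2) \<le> sqrt (sin (pi * x / 2)) * cos (real 0 * pi * x)"
    by (simp add: real_le_rsqrt)
qed

lemma J_0_le: "J 0 \<le> 1"
  using has_integral_le[OF has_integral_J[of 0] has_integral_const_real[of 1 0 1]] by simp

lemma J_0_pos: "0 < J 0"
  by (rule less_le_trans[OF _ J_0_ge]) simp

lemma J_1: "J 1 = - J 0 / 5"
  using J_recurrence[of 0] by simp

lemma J_neg: "0 < m \<Longrightarrow> J m < 0"
proof (induction m rule: nat_induct_non_zero)
  case 1
  then show ?case
    using J_1 J_0_pos by simp
next
  case (Suc m)
  then have "(real m + 5/4) * J (Suc m) < 0"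
    unfolding J_recurrence by (simp add: mult_pos_neg)
  then show ?case
    by (simp add: mult_less_0_iff)
qed

lemma J_less_Suc:
  assumes "0 < m"
  shows "J m < J (Suc m)"
proof -
  have "(real m + 5/4) * (J (Suc m) - J m) = - 3/2 * J m"
    using J_recurrence[of m] by (simp add: field_simps)
  also have "\<dots> > 0"
    using J_neg[OF assms] by simp
  finally show ?thesis
    by (simp add: zero_less_mult_iff)
qed

lemma J_strict_mono:
  assumes "0 < a" and "a < b"
  shows "J a < J b"
  using Suc_leI[OF \<open>a < b\<close>]
proof (induction b rule: dec_induct)
  case base
  show ?case
    using J_less_Suc[OF \<open>0 < a\<close>] .
next
  case (step n)
  then show ?case
    using J_less_Suc[of n] \<open>0 < a\<close> by simp
qed

lemma J_mono: "0 < a \<Longrightarrow> a \<le> b \<Longrightarrow> J a \<le> J b"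
  using J_strict_mono[of a b] by (cases "a = b") auto

lemma abs_J_le: "\<bar>J m\<bar> \<le> 1"
proof (cases "m = 0")
  case False
  then have "J 1 \<le> J m" and "J m < 0"
    by (simp_all add: J_mono J_neg)
  then show ?thesis
    using J_1 J_0_le J_0_pos by simp
qed (use J_0_le J_0_pos in simp)

lemma J_partial_sum: "J 0 + 2 * (\<Sum>i = 1..p. J i) = - (4 * real p + 5) * J (Suc p)"
proof (induction p)
  case 0
  then show ?case
    using J_1 by simp
next
  case (Suc p)
  then show ?case
    using J_recurrence[of "Suc p"] by (simp add: field_simps)
qed

lemma R_diag_pos: "0 < j \<Longrightarrow> 0 < R j j"
  using J_neg[of "j + j"] J_0_pos by (simp add: R_eq_J)

lemma R_offdiag_neg: "0 < j \<Longrightarrow> 0 < k \<Longrightarrow> j \<noteq> k \<Longrightarrow> R j k < 0"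
  using J_strict_mono[OF nat_absdiff_pos nat_absdiff_less_add] by (simp add: R_eq_J mult_pos_neg)

lemma abs_R_le: "\<bar>R j k\<bar> \<le> 2 * sqrt 2"
proof -
  have "\<bar>J (nat_absdiff j k) - J (j + k)\<bar> \<le> 2"
    using abs_J_le[of "nat_absdiff j k"] abs_J_le[of "j + k"] by linarith
  then show ?thesis
    by (simp add: R_eq_J abs_mult)
qed

lemma R_subdiag_antimono: "0 < m \<Longrightarrow> m \<le> m' \<Longrightarrow> R m' (m' - 1) \<le> R m (m - 1)"
  using J_mono[of "m + (m - 1)" "m' + (m' - 1)"] by (simp add: R_eq_J nat_absdiff_def)

lemma R_column_sum_ge:
  assumes "0 < n"
  shows "- R n n \<le> 2 * (\<Sum>i = 1..n - 1. R i n)"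
proof -
  have "R i n = sqrt 2 * (J (n - i) - J (i + n))" if "i \<in> {1..n - 1}" for i
    using that by (auto simp: R_eq_J nat_absdiff_def)
  then have "(\<Sum>i = 1..n - 1. R i n) = (\<Sum>i = 1..n - 1. sqrt 2 * (J (n - i) - J (i + n)))"
    by (rule sum.cong[OF refl])
  also have "\<dots> = sqrt 2 * ((\<Sum>i = 1..n - 1. J (n - i)) - (\<Sum>i = 1..n - 1. J (i + n)))"
    by (simp add: sum_distrib_left right_diff_distrib sum_subtractf)
  also have "(\<Sum>i = 1..n - 1. J (n - i)) = (\<Sum>i = 1..n - 1. J i)"
    using sum.atLeastAtMost_rev[of J 1 "n - 1"] assms by simp
  finally have sum_eq: "2 * (\<Sum>i = 1..n - 1. R i n) + R n n
      = sqrt 2 * ((J 0 + 2 * (\<Sum>i = 1..n - 1. J i)) - 2 * (\<Sum>i = 1..n - 1. J (i + n)) - J (n + n))"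
    by (simp add: R_eq_J algebra_simps)
  have "J 0 + 2 * (\<Sum>i = 1..n - 1. J i) > 0"
    using J_partial_sum[of "n - 1"] J_neg[of n] assms by (simp add: mult_neg_neg)
  moreover have "(\<Sum>i = 1..n - 1. J (i + n)) \<le> 0"
    by (intro sum_nonpos) (simp add: J_neg less_imp_le)
  moreover have "J (n + n) < 0"
    using J_neg assms by simp
  ultimately have "0 < sqrt 2 * ((J 0 + 2 * (\<Sum>i = 1..n - 1. J i)) - 2 * (\<Sum>i = 1..n - 1. J (i + n)) - J (n + n))"
    by simp
  then show ?thesis
    unfolding sum_eq[symmetric] by simp
qed

theorem lemma3p6:
  fixes n j k :: nat
  assumes "2 \<le> n" and "j \<in> {1..n}" and "k \<in> {1..n}"
  shows
    "(R j j > 0 \<and> (j \<noteq> k \<longrightarrow> R j k < 0) \<and> \<bar>R j k\<bar> \<le> 2 * sqrt 2)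
     \<and> (\<forall>m m'. 2 \<le> m \<and> m \<le> m' \<longrightarrow> R m' (m' - 1) \<le> R m (m - 1))
     \<and> 2 * (\<Sum>i = 1..n - 1. R i n) \<ge> - R n n
     \<and> (S j k > (1 / pi) * ln ((real j + real k + 1/2) / (\<bar>real j - real k\<bar> + 1/2))
        \<and> (1 / pi) * ln ((real j + real k + 1/2) / (\<bar>real j - real k\<bar> + 1/2)) > 0)
     \<and> (j \<noteq> k \<longrightarrow> S j k < (1 / pi) * ln ((real j + real k - 1/2) / (\<bar>real j - real k\<bar> - 1/2)))
     \<and> S j j < 2 / pi + (1 / pi) * ln (4 * real j - 1)
     \<and> (\<forall>a b. 1 \<le> a \<and> a \<le> b \<and> b \<le> n \<longrightarrow> S a n \<le> S b n)"
proof -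
  have "0 < j" "0 < k" "0 < n"
    using assms by auto
  then show ?thesis
    using R_diag_pos R_offdiag_neg abs_R_le R_subdiag_antimono R_column_sum_ge
      S_gt_ln ln_add_over_absdiff_pos S_lt_ln S_diag_lt S_mono_left
    by simp
qed

end
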